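(* Let $(G_n)_{n\in\mathbb N}$ be a sequence of finite graphs that converges elementarily to some ultra-homogeneous graph $\hat G$. Then the following are equivalent: (i) $(G_n)$ is $\mathrm{FO}$-convergent; (ii) $(G_n)$ is $\mathrm{QF}$-convergent; (iii) $(G_n)$ is L-convergent.
   Context: For a first-order graph formula $\phi$ with free variables among $x_1,\dots,x_p$ and a finite graph $G$, $\langle\phi,G\rangle=|\{(v_1,\dots,v_p)\in V(G)^p:G\models\phi(v_1,\dots,v_p)\}|/|G|^p$. $(G_n)$ is $X$-convergent (for a set $X$ of formulas) if $\langle\phi,G_n\rangle$ converges for all $\phi\in X$; FO is the set of all first-order formulas and QF the set of quantifier-free formulas (using adjacency and equality). $(G_n)$ is L-convergent if $\hom(F,G_n)/|G_n|^{|F|}$ converges for every finite graph $F$. $(G_n)$ converges elementarily to a (finite or countable) graph $\hat G$ if for every first-order sentence $\theta$, $\hat G\models\theta$ iff $G_n\models\theta$ for all sufficiently large $n$. A graph is ultra-homogeneous if every isomorphism between finite induced subgraphs extends to an automorphism of the graph. *)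

theory Defs
  imports "HOL-Library.FuncSet" Complex_Main
begin

record 'a graph =
  verts :: "'a set"
  adj :: "'a \<Rightarrow> 'a \<Rightarrow> bool"

definition is_graph :: "'a graph \<Rightarrow> bool" where
  "is_graph G \<longleftrightarrow> verts G \<noteq> {} \<and>
     (\<forall>u v. adj G u v \<longrightarrow> u \<in> verts G \<and> v \<in> verts G) \<and>
     (\<forall>u v. adj G u v \<longrightarrow> adj G v u) \<and>
     (\<forall>u. \<not> adj G u u)"

definition finite_graph :: "'a graph \<Rightarrow> bool" where
  "finite_graph G \<longleftrightarrow> is_graph G \<and> finite (verts G)"

datatype fo =
    Adj nat nat
  | Eq nat nat
  | Neg fo
  | Conj fo fo
  | Ex nat fo

fun fv :: "fo \<Rightarrow> nat set" where
  "fv (Adj i j) = {i, j}"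
| "fv (Eq i j) = {i, j}"
| "fv (Neg \<phi>) = fv \<phi>"
| "fv (Conj \<phi> \<psi>) = fv \<phi> \<union> fv \<psi>"
| "fv (Ex i \<phi>) = fv \<phi> - {i}"

fun qfree :: "fo \<Rightarrow> bool" where
  "qfree (Adj i j) = True"
| "qfree (Eq i j) = True"
| "qfree (Neg \<phi>) = qfree \<phi>"
| "qfree (Conj \<phi> \<psi>) = (qfree \<phi> \<and> qfree \<psi>)"
| "qfree (Ex i \<phi>) = False"

fun sat :: "'a graph \<Rightarrow> fo \<Rightarrow> (nat \<Rightarrow> 'a) \<Rightarrow> bool" where
  "sat G (Adj i j) s = adj G (s i) (s j)"
| "sat G (Eq i j) s = (s i = s j)"
| "sat G (Neg \<phi>) s = (\<not> sat G \<phi> s)"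
| "sat G (Conj \<phi> \<psi>) s = (sat G \<phi> s \<and> sat G \<psi> s)"
| "sat G (Ex i \<phi>) s = (\<exists>v\<in>verts G. sat G \<phi> (s(i := v)))"

definition sentence :: "fo \<Rightarrow> bool" where
  "sentence \<theta> \<longleftrightarrow> fv \<theta> = {}"

definition models :: "'a graph \<Rightarrow> fo \<Rightarrow> bool" where
  "models G \<theta> \<longleftrightarrow> (\<forall>s. sat G \<theta> s)"

definition nvars :: "fo \<Rightarrow> nat" where
  "nvars \<phi> = (if fv \<phi> = {} then 0 else Suc (Max (fv \<phi>)))"

definition stone :: "fo \<Rightarrow> 'a graph \<Rightarrow> real" where
  "stone \<phi> G =
     real (card {t \<in> {0..<nvars \<phi>} \<rightarrow>\<^sub>E verts G. sat G \<phi> t})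
     / real (card (verts G)) ^ nvars \<phi>"

definition FO_convergent :: "(nat \<Rightarrow> 'a graph) \<Rightarrow> bool" where
  "FO_convergent Gs \<longleftrightarrow> (\<forall>\<phi>. convergent (\<lambda>n. stone \<phi> (Gs n)))"

definition QF_convergent :: "(nat \<Rightarrow> 'a graph) \<Rightarrow> bool" where
  "QF_convergent Gs \<longleftrightarrow> (\<forall>\<phi>. qfree \<phi> \<longrightarrow> convergent (\<lambda>n. stone \<phi> (Gs n)))"

definition hom_count :: "'b graph \<Rightarrow> 'a graph \<Rightarrow> nat" where
  "hom_count F G = card {f \<in> verts F \<rightarrow>\<^sub>E verts G.
      \<forall>u v. adj F u v \<longrightarrow> adj G (f u) (f v)}"

definition hom_density :: "'b graph \<Rightarrow> 'a graph \<Rightarrow> real" where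
  "hom_density F G = real (hom_count F G) / real (card (verts G)) ^ card (verts F)"

text \<open>L-convergence: hom densities converge for every finite graph F
  (every finite graph is isomorphic to one on natural-number vertices).\<close>
definition L_convergent :: "(nat \<Rightarrow> 'a graph) \<Rightarrow> bool" where
  "L_convergent Gs \<longleftrightarrow>
     (\<forall>F :: nat graph. finite_graph F \<longrightarrow> convergent (\<lambda>n. hom_density F (Gs n)))"

definition elem_converges_to :: "(nat \<Rightarrow> 'a graph) \<Rightarrow> 'b graph \<Rightarrow> bool" where
  "elem_converges_to Gs H \<longleftrightarrow>
     (\<forall>\<theta>. sentence \<theta> \<longrightarrow>
        (models H \<theta> \<longleftrightarrow> (\<forall>\<^sub>F n in sequentially. models (Gs n) \<theta>)))"

definition ultra_homogeneous :: "'a graph \<Rightarrow> bool" where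
  "ultra_homogeneous G \<longleftrightarrow>
     (\<forall>A B f. A \<subseteq> verts G \<and> B \<subseteq> verts G \<and> finite A \<and> bij_betw f A B \<and>
        (\<forall>x\<in>A. \<forall>y\<in>A. adj G x y \<longleftrightarrow> adj G (f x) (f y)) \<longrightarrow>
        (\<exists>g. bij_betw g (verts G) (verts G) \<and>
             (\<forall>x\<in>verts G. \<forall>y\<in>verts G. adj G x y \<longleftrightarrow> adj G (g x) (g y)) \<and>
             (\<forall>x\<in>A. g x = f x)))"

end

theory Submission
  imports Defs
begin

text \<open>
  Everything is reduced to Stone pairings of quantifier-free formulas, and FO-convergence trivially
  implies QF-convergence. Since the limit \<open>H\<close> is ultra-homogeneous, tuples of the same atomic type
  satisfy the same formulas in \<open>H\<close>, so every formula is equivalent in \<open>H\<close> to a disjunction of atomic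
  types. This equivalence is a first-order sentence, hence holds in \<open>G\<^sub>n\<close> for large \<open>n\<close>; so
  QF-convergence implies FO-convergence. A homomorphism density is the Stone pairing of a conjunction
  of adjacency atoms, so QF-convergence implies L-convergence. Conversely, the indicator of a
  quantifier-free formula is a linear combination of indicators of conjunctions of atoms. An equality
  between distinct variables is eliminated by merging them, at the cost of a factor \<open>1 / |G\<^sub>n|\<close>;
  this factor converges because elementary convergence either fixes \<open>|G\<^sub>n|\<close> eventually or forces it
  to infinity. What remains is a homomorphism density, so L-convergence implies QF-convergence.
\<close>

lemma finite_fv: "finite (fv \<phi>)"
  by (induction \<phi>) auto

lemma fv_subset_nvars: "fv \<phi> \<subseteq> {0..<nvars \<phi>}"
  using Max_ge[OF finite_fv] by (fastforce simp: nvars_def less_Suc_eq_le)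

lemma nvars_eqI: "fv \<phi> = {0..<k} \<Longrightarrow> nvars \<phi> = k"
  by (cases k) (auto simp: nvars_def intro: Max_eqI)

lemma sentence_iff_nvars: "sentence \<phi> \<longleftrightarrow> nvars \<phi> = 0"
  by (simp add: sentence_def nvars_def)

lemma sat_cong: "(\<And>i. i \<in> fv \<phi> \<Longrightarrow> s i = s' i) \<Longrightarrow> sat G \<phi> s = sat G \<phi> s'"
proof (induction \<phi> arbitrary: s s')
  case (Neg \<phi>)
  show ?case using Neg.IH[of s s'] Neg.prems by simp
next
  case (Conj \<phi> \<psi>)
  show ?case using Conj.IH(1)[of s s'] Conj.IH(2)[of s s'] Conj.prems by simp
next
  case (Ex i \<phi>)
  have "sat G \<phi> (s(i := v)) = sat G \<phi> (s'(i := v))" for v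
    by (rule Ex.IH) (use Ex.prems in auto)
  then show ?case by simp
qed simp_all

definition Or :: "fo \<Rightarrow> fo \<Rightarrow> fo" where
  "Or \<phi> \<psi> = Neg (Conj (Neg \<phi>) (Neg \<psi>))"

definition Iff :: "fo \<Rightarrow> fo \<Rightarrow> fo" where
  "Iff \<phi> \<psi> = Conj (Or (Neg \<phi>) \<psi>) (Or (Neg \<psi>) \<phi>)"

definition All :: "nat \<Rightarrow> fo \<Rightarrow> fo" where
  "All i \<phi> = Neg (Ex i (Neg \<phi>))"

text \<open>The empty conjunction is \<open>Eq 0 0\<close> and the empty disjunction its negation, so variable \<open>0\<close>
  is free in both.\<close>

definition Conjs :: "fo list \<Rightarrow> fo" where
  "Conjs \<phi>s = foldr Conj \<phi>s (Eq 0 0)"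

definition Disjs :: "fo list \<Rightarrow> fo" where
  "Disjs \<phi>s = foldr Or \<phi>s (Neg (Eq 0 0))"

definition Alls :: "nat list \<Rightarrow> fo \<Rightarrow> fo" where
  "Alls is \<phi> = foldr All is \<phi>"

text \<open>A valid formula with free variables exactly \<open>{0..<k}\<close> (for \<open>k > 0\<close>): conjoining it fixes the
  number of variables, on which the Stone pairing depends.\<close>

definition Taut :: "nat \<Rightarrow> fo" where
  "Taut k = Conjs (map (\<lambda>i. Eq i i) [0..<k])"

lemma sat_Or [simp]: "sat G (Or \<phi> \<psi>) s \<longleftrightarrow> sat G \<phi> s \<or> sat G \<psi> s"
  by (simp add: Or_def)

lemma sat_Iff [simp]: "sat G (Iff \<phi> \<psi>) s \<longleftrightarrow> (sat G \<phi> s \<longleftrightarrow> sat G \<psi> s)"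
  by (auto simp: Iff_def)

lemma sat_All [simp]: "sat G (All i \<phi>) s \<longleftrightarrow> (\<forall>v\<in>verts G. sat G \<phi> (s(i := v)))"
  by (simp add: All_def)

lemma sat_Conjs [simp]: "sat G (Conjs \<phi>s) s \<longleftrightarrow> (\<forall>\<phi>\<in>set \<phi>s. sat G \<phi> s)"
  by (induction \<phi>s) (auto simp: Conjs_def)

lemma sat_Disjs [simp]: "sat G (Disjs \<phi>s) s \<longleftrightarrow> (\<exists>\<phi>\<in>set \<phi>s. sat G \<phi> s)"
  by (induction \<phi>s) (auto simp: Disjs_def)

lemma sat_Taut [simp]: "sat G (Taut k) s"
  by (simp add: Taut_def)

lemma fv_Or [simp]: "fv (Or \<phi> \<psi>) = fv \<phi> \<union> fv \<psi>"
  and fv_Iff [simp]: "fv (Iff \<phi> \<psi>) = fv \<phi> \<union> fv \<psi>"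
  and fv_All [simp]: "fv (All i \<phi>) = fv \<phi> - {i}"
  by (auto simp: Or_def Iff_def All_def)

lemma fv_Conjs [simp]: "fv (Conjs \<phi>s) = insert 0 (\<Union>(fv ` set \<phi>s))"
  by (induction \<phi>s) (auto simp: Conjs_def)

lemma fv_Disjs [simp]: "fv (Disjs \<phi>s) = insert 0 (\<Union>(fv ` set \<phi>s))"
  by (induction \<phi>s) (auto simp: Disjs_def Or_def)

lemma fv_Alls [simp]: "fv (Alls is \<phi>) = fv \<phi> - set is"
  by (induction "is") (auto simp: Alls_def)

lemma fv_Taut: "0 < k \<Longrightarrow> fv (Taut k) = {0..<k}"
  by (auto simp: Taut_def)

lemma nvars_Conj_Taut: "fv \<psi> \<subseteq> {0..<k} \<Longrightarrow> 0 < k \<Longrightarrow> nvars (Conj \<psi> (Taut k)) = k"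
  by (rule nvars_eqI) (auto simp: fv_Taut)

lemma qfree_Or [simp]: "qfree (Or \<phi> \<psi>) \<longleftrightarrow> qfree \<phi> \<and> qfree \<psi>"
  by (simp add: Or_def)

lemma qfree_Conjs [simp]: "qfree (Conjs \<phi>s) \<longleftrightarrow> (\<forall>\<phi>\<in>set \<phi>s. qfree \<phi>)"
  by (induction \<phi>s) (auto simp: Conjs_def)

lemma qfree_Disjs [simp]: "qfree (Disjs \<phi>s) \<longleftrightarrow> (\<forall>\<phi>\<in>set \<phi>s. qfree \<phi>)"
  by (induction \<phi>s) (auto simp: Disjs_def)

lemma qfree_Taut [simp]: "qfree (Taut k)"
  by (simp add: Taut_def)

lemma sat_Alls:
  "sat G (Alls is \<phi>) s \<longleftrightarrow>
     (\<forall>s'. (\<forall>i\<in>set is. s' i \<in> verts G) \<longrightarrow> (\<forall>i. i \<notin> set is \<longrightarrow> s' i = s i) \<longrightarrow> sat G \<phi> s')"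
proof (induction "is" arbitrary: s)
  case Nil
  then show ?case by (auto simp: Alls_def fun_eq_iff)
next
  case (Cons i "is")
  show ?case
  proof (intro iffI allI impI)
    fix s' assume "sat G (Alls (i # is) \<phi>) s" and s': "\<forall>i\<in>set (i # is). s' i \<in> verts G"
      "\<forall>j. j \<notin> set (i # is) \<longrightarrow> s' j = s j"
    then have "sat G (Alls is \<phi>) (s(i := s' i))" by (simp add: Alls_def)
    with s' show "sat G \<phi> s'" unfolding Cons.IH by auto
  next
    assume all: "\<forall>s'. (\<forall>j\<in>set (i # is). s' j \<in> verts G) \<longrightarrow> (\<forall>j. j \<notin> set (i # is) \<longrightarrow> s' j = s j) \<longrightarrow> sat G \<phi> s'"
    have "sat G (Alls is \<phi>) (s(i := v))" if v: "v \<in> verts G" for v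
      unfolding Cons.IH
    proof (intro allI impI)
      fix s' assume "\<forall>j\<in>set is. s' j \<in> verts G" "\<forall>j. j \<notin> set is \<longrightarrow> s' j = (s(i := v)) j"
      then have "\<forall>j\<in>set (i # is). s' j \<in> verts G" "\<forall>j. j \<notin> set (i # is) \<longrightarrow> s' j = s j"
        using v by (auto split: if_splits)
      then show "sat G \<phi> s'" using all by blast
    qed
    then show "sat G (Alls (i # is) \<phi>) s" by (simp add: Alls_def)
  qed
qed

lemma models_Alls_upt:
  "models G (Alls [0..<k] \<phi>) \<longleftrightarrow> (\<forall>s. (\<forall>i<k. s i \<in> verts G) \<longrightarrow> sat G \<phi> s)"
  unfolding models_def sat_Alls
proof (intro iffI allI impI)
  fix s assume "\<forall>s s'. (\<forall>i\<in>set [0..<k]. s' i \<in> verts G) \<longrightarrow> (\<forall>i. i \<notin> set [0..<k] \<longrightarrow> s' i = s i) \<longrightarrow> sat G \<phi> s'"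
    and "\<forall>i<k. s i \<in> verts G"
  then show "sat G \<phi> s" by fastforce
qed simp

lemma models_Neg: "sentence \<phi> \<Longrightarrow> models G (Neg \<phi>) \<longleftrightarrow> \<not> models G \<phi>"
  unfolding models_def sentence_def using sat_cong[of \<phi>] by (metis empty_iff sat.simps(3))

definition count_sat :: "nat set \<Rightarrow> fo list \<Rightarrow> 'a graph \<Rightarrow> nat" where
  "count_sat I \<phi>s G = card {t \<in> I \<rightarrow>\<^sub>E verts G. \<forall>\<phi>\<in>set \<phi>s. sat G \<phi> t}"

lemma stone_eq_count_sat:
  "stone \<phi> G = real (count_sat {0..<nvars \<phi>} [\<phi>] G) / real (card (verts G)) ^ nvars \<phi>"
  by (simp add: stone_def count_sat_def)

lemma stone_sentence:
  assumes \<phi>: "sentence \<phi>"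
  shows "stone \<phi> G = of_bool (models G \<phi>)"
proof -
  have "nvars \<phi> = 0" using \<phi> by (simp add: sentence_iff_nvars)
  moreover have "models G \<phi> \<longleftrightarrow> sat G \<phi> (\<lambda>_. undefined)"
    using \<phi> sat_cong[of \<phi>] by (auto simp: models_def sentence_def)
  moreover have "{t \<in> {0..<0} \<rightarrow>\<^sub>E verts G. sat G \<phi> t} =
      (if sat G \<phi> (\<lambda>_. undefined) then {\<lambda>_. undefined} else {})"
    by auto
  ultimately show ?thesis by (simp add: stone_def)
qed

lemma stone_cong:
  assumes "nvars \<phi> = nvars \<psi>"
    and "\<And>t. t \<in> {0..<nvars \<phi>} \<rightarrow>\<^sub>E verts G \<Longrightarrow> sat G \<phi> t \<longleftrightarrow> sat G \<psi> t"
  shows "stone \<phi> G = stone \<psi> G"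
proof -
  have "{t \<in> {0..<nvars \<phi>} \<rightarrow>\<^sub>E verts G. sat G \<phi> t} = {t \<in> {0..<nvars \<psi>} \<rightarrow>\<^sub>E verts G. sat G \<psi> t}"
    using assms by auto
  then show ?thesis using assms(1) by (simp add: stone_def)
qed

lemma stone_eq_if_models_Alls_Iff:
  assumes "nvars \<phi> = k" "nvars \<psi> = k" "models G (Alls [0..<k] (Iff \<phi> \<psi>))"
  shows "stone \<phi> G = stone \<psi> G"
proof (rule stone_cong)
  fix t assume "t \<in> {0..<nvars \<phi>} \<rightarrow>\<^sub>E verts G"
  then have "\<forall>i<k. t i \<in> verts G" using assms(1) by auto
  then show "sat G \<phi> t \<longleftrightarrow> sat G \<psi> t" using assms(3) by (simp add: models_Alls_upt)
qed (use assms in simp)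

lemma eventually_models_iff:
  assumes "elem_converges_to Gs H" "sentence \<theta>"
  shows "\<forall>\<^sub>F n in sequentially. models (Gs n) \<theta> \<longleftrightarrow> models H \<theta>"
proof (cases "models H \<theta>")
  case True
  then show ?thesis using assms unfolding elem_converges_to_def by simp
next
  case False
  then have "\<forall>\<^sub>F n in sequentially. models (Gs n) (Neg \<theta>)"
    using assms models_Neg[of \<theta> H] unfolding elem_converges_to_def by (simp add: sentence_def)
  then show ?thesis
    by eventually_elim (use False assms(2) models_Neg in blast)
qed

lemma convergent_stone_sentence:
  assumes "elem_converges_to Gs H" "sentence \<theta>"
  shows "convergent (\<lambda>n. stone \<theta> (Gs n))"
proof -
  have "\<forall>\<^sub>F n in sequentially. stone \<theta> (Gs n) = of_bool (models H \<theta>)"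
    using eventually_models_iff[OF assms] by eventually_elim (simp add: stone_sentence assms(2))
  then show ?thesis by (simp add: convergent_cong[OF _] convergent_const)
qed

definition Distinct :: "nat \<Rightarrow> fo" where
  "Distinct m = Conjs [Neg (Eq i j). i \<leftarrow> [0..<m], j \<leftarrow> [0..<m], i \<noteq> j]"

definition AtLeast :: "nat \<Rightarrow> fo" where
  "AtLeast m = Neg (Alls [0..<m] (Neg (Distinct m)))"

lemma sat_Distinct: "sat G (Distinct m) s \<longleftrightarrow> inj_on s {0..<m}"
  by (auto simp: Distinct_def inj_on_def)

lemma sentence_AtLeast: "0 < m \<Longrightarrow> sentence (AtLeast m)"
  by (auto simp: sentence_def AtLeast_def Distinct_def)

lemma ex_inj_on_upt_iff:
  "(\<exists>s. (\<forall>i<m. s i \<in> A) \<and> inj_on s {0..<m}) \<longleftrightarrow> infinite A \<or> m \<le> card A"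
proof
  assume "\<exists>s. (\<forall>i<m. s i \<in> A) \<and> inj_on s {0..<m}"
  then obtain s where "s ` {0..<m} \<subseteq> A" "inj_on s {0..<m}" by fastforce
  then show "infinite A \<or> m \<le> card A" using card_inj_on_le[of s "{0..<m}" A] by auto
next
  assume "infinite A \<or> m \<le> card A"
  then obtain B where "finite B" "B \<subseteq> A" "m \<le> card B"
    using infinite_arbitrarily_large obtain_subset_with_card_n by (metis order.refl)
  then obtain s where "s ` {0..<m} \<subseteq> B" "inj_on s {0..<m}"
    using card_le_inj[of "{0..<m}" B] by auto
  then show "\<exists>s. (\<forall>i<m. s i \<in> A) \<and> inj_on s {0..<m}" using \<open>B \<subseteq> A\<close> by fastforce
qed

lemma models_AtLeast:
  assumes "0 < m"
  shows "models G (AtLeast m) \<longleftrightarrow> infinite (verts G) \<or> m \<le> card (verts G)"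
proof -
  have "sentence (Alls [0..<m] (Neg (Distinct m)))"
    using sentence_AtLeast[OF assms] by (simp add: AtLeast_def sentence_def)
  then have "models G (AtLeast m) \<longleftrightarrow> (\<exists>s. (\<forall>i<m. s i \<in> verts G) \<and> inj_on s {0..<m})"
    unfolding AtLeast_def by (simp add: models_Neg models_Alls_upt sat_Distinct)
  then show ?thesis by (simp add: ex_inj_on_upt_iff)
qed

lemma convergent_inverse_card:
  assumes fin: "\<And>n. finite_graph (Gs n)" and H: "is_graph H" and ec: "elem_converges_to Gs H"
  shows "convergent (\<lambda>n. 1 / real (card (verts (Gs n))))"
proof (cases "finite (verts H)")
  case True
  define c where "c = card (verts H)"
  have c: "0 < c" using H True by (auto simp: c_def is_graph_def card_gt_0_iff)
  have H_size: "models H (AtLeast c)" "\<not> models H (AtLeast (Suc c))"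
    using True c by (simp_all add: models_AtLeast c_def)
  have "\<forall>\<^sub>F n in sequentially. models (Gs n) (AtLeast c) \<and> \<not> models (Gs n) (AtLeast (Suc c))"
    using eventually_models_iff[OF ec sentence_AtLeast[OF c]]
      eventually_models_iff[OF ec sentence_AtLeast[OF zero_less_Suc[of c]]]
    by eventually_elim (simp add: H_size)
  then have "\<forall>\<^sub>F n in sequentially. 1 / real (card (verts (Gs n))) = 1 / real c"
    by eventually_elim (use fin in \<open>simp add: models_AtLeast c finite_graph_def\<close>)
  from convergent_cong[OF this] show ?thesis by (simp add: convergent_const)
next
  case False
  have "\<forall>\<^sub>F n in sequentially. Z \<le> real (card (verts (Gs n)))" for Z :: real
  proof -
    define m where "m = Suc (nat \<lceil>Z\<rceil>)"
    have "\<forall>\<^sub>F n in sequentially. models (Gs n) (AtLeast m)"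
      using eventually_models_iff[OF ec sentence_AtLeast[of m]] False
      by (simp add: m_def models_AtLeast)
    then show ?thesis
      by eventually_elim (use fin in \<open>simp add: m_def models_AtLeast finite_graph_def, linarith\<close>)
  qed
  then have "filterlim (\<lambda>n. real (card (verts (Gs n)))) at_top sequentially"
    by (simp add: filterlim_at_top)
  then have "(\<lambda>n. 1 / real (card (verts (Gs n)))) \<longlonglongrightarrow> 0"
    using tendsto_inverse_0_at_top by (simp add: inverse_eq_divide)
  then show ?thesis by (auto simp: convergent_def)
qed

section \<open>Quantifier elimination in an ultra-homogeneous graph\<close>

definition automorphism :: "'a graph \<Rightarrow> ('a \<Rightarrow> 'a) \<Rightarrow> bool" where
  "automorphism G g \<longleftrightarrow> bij_betw g (verts G) (verts G) \<and>
     (\<forall>x\<in>verts G. \<forall>y\<in>verts G. adj G x y \<longleftrightarrow> adj G (g x) (g y))"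

lemma sat_automorphism:
  assumes g: "automorphism G g" and s: "\<And>i. i \<in> fv \<phi> \<Longrightarrow> s i \<in> verts G"
  shows "sat G \<phi> (g \<circ> s) = sat G \<phi> s"
  using s
proof (induction \<phi> arbitrary: s)
  case (Adj i j)
  then show ?case using g by (simp add: automorphism_def)
next
  case (Eq i j)
  then show ?case using g by (auto simp: automorphism_def bij_betw_def inj_on_def)
next
  case (Neg \<phi>)
  then show ?case by simp
next
  case (Conj \<phi> \<psi>)
  then show ?case by (metis UnCI fv.simps(4) sat.simps(4))
next
  case (Ex i \<phi>)
  have IH: "sat G \<phi> (g \<circ> s(i := v)) = sat G \<phi> (s(i := v))" if "v \<in> verts G" for v
    by (rule Ex.IH) (use Ex.prems that in auto)
  have "g ` verts G = verts G" using g by (simp add: automorphism_def bij_betw_def)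
  then have "(\<exists>w\<in>verts G. sat G \<phi> ((g \<circ> s)(i := w))) \<longleftrightarrow> (\<exists>v\<in>verts G. sat G \<phi> ((g \<circ> s)(i := g v)))"
    by (metis (no_types, lifting) imageE imageI)
  also have "\<dots> \<longleftrightarrow> (\<exists>v\<in>verts G. sat G \<phi> (s(i := v)))"
    using IH by (simp add: fun_upd_comp)
  finally show ?case by (simp only: sat.simps(5))
qed

text \<open>Restricted to \<open>{0..<k} \<times> {0..<k}\<close>, so that there are only finitely many atomic types.\<close>

definition atomic_type :: "'a graph \<Rightarrow> nat \<Rightarrow> (nat \<Rightarrow> 'a) \<Rightarrow> nat \<times> nat \<Rightarrow> bool \<times> bool" where
  "atomic_type G k s = (\<lambda>(i, j) \<in> {0..<k} \<times> {0..<k}. (adj G (s i) (s j), s i = s j))"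

definition Lit :: "bool \<Rightarrow> fo \<Rightarrow> fo" where
  "Lit b \<phi> = (if b then \<phi> else Neg \<phi>)"

definition atomic_type_formula :: "nat \<Rightarrow> (nat \<times> nat \<Rightarrow> bool \<times> bool) \<Rightarrow> fo" where
  "atomic_type_formula k D = Conjs
     [Conj (Lit (fst (D (i, j))) (Adj i j)) (Lit (snd (D (i, j))) (Eq i j)). i \<leftarrow> [0..<k], j \<leftarrow> [0..<k]]"

lemma sat_Lit [simp]: "sat G (Lit b \<phi>) s \<longleftrightarrow> (b \<longleftrightarrow> sat G \<phi> s)"
  and fv_Lit [simp]: "fv (Lit b \<phi>) = fv \<phi>"
  and qfree_Lit [simp]: "qfree (Lit b \<phi>) = qfree \<phi>"
  by (simp_all add: Lit_def)

lemma atomic_type_eq_iff: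
  "atomic_type G k s = atomic_type G' k s' \<longleftrightarrow>
     (\<forall>i<k. \<forall>j<k. (adj G (s i) (s j) \<longleftrightarrow> adj G' (s' i) (s' j)) \<and> (s i = s j \<longleftrightarrow> s' i = s' j))"
  unfolding atomic_type_def fun_eq_iff by (auto split: if_splits)

lemma finite_range_atomic_type: "finite (range (atomic_type G k))"
proof (rule finite_subset)
  show "range (atomic_type G k) \<subseteq> ({0..<k} \<times> {0..<k}) \<rightarrow>\<^sub>E UNIV"
    unfolding atomic_type_def by (intro image_subsetI restrict_PiE[THEN iffD2]) auto
qed (simp add: finite_PiE)

lemma sat_atomic_type_formula_iff:
  "sat G (atomic_type_formula k D) s \<longleftrightarrow> (\<forall>i<k. \<forall>j<k. D (i, j) = (adj G (s i) (s j), s i = s j))"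
  by (auto simp: atomic_type_formula_def prod_eq_iff)

lemma sat_atomic_type_formula:
  "sat G (atomic_type_formula k (atomic_type G' k s')) s \<longleftrightarrow> atomic_type G k s = atomic_type G' k s'"
  unfolding sat_atomic_type_formula_iff atomic_type_eq_iff by (auto simp: atomic_type_def)

lemma fv_atomic_type_formula: "0 < k \<Longrightarrow> fv (atomic_type_formula k D) \<subseteq> {0..<k}"
  by (auto simp: atomic_type_formula_def)

lemma qfree_atomic_type_formula: "qfree (atomic_type_formula k D)"
  by (auto simp: atomic_type_formula_def)

lemma ultra_homogeneous_extend_tuple:
  assumes uh: "ultra_homogeneous H" and s: "\<forall>i<k. s i \<in> verts H" and s': "\<forall>i<k. s' i \<in> verts H"
    and type: "atomic_type H k s = atomic_type H k s'"
  obtains g where "automorphism H g" "\<forall>i<k. g (s i) = s' i"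
proof -
  have same: "\<forall>i<k. \<forall>j<k. (adj H (s i) (s j) \<longleftrightarrow> adj H (s' i) (s' j)) \<and> (s i = s j \<longleftrightarrow> s' i = s' j)"
    using type by (simp add: atomic_type_eq_iff)
  define f where "f v = s' (SOME i. i < k \<and> s i = v)" for v
  have f: "f (s i) = s' i" if i: "i < k" for i
  proof -
    define j where "j = (SOME j. j < k \<and> s j = s i)"
    have "j < k \<and> s j = s i"
      unfolding j_def using i someI[of "\<lambda>j. j < k \<and> s j = s i" i] by blast
    then show ?thesis using same i unfolding f_def j_def[symmetric] by blast
  qed
  have "bij_betw f (s ` {0..<k}) (s' ` {0..<k})"
  proof (rule bij_betw_imageI)
    show "inj_on f (s ` {0..<k})" using f same by (auto simp: inj_on_def)
    show "f ` s ` {0..<k} = s' ` {0..<k}" using f by (force simp: image_image)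
  qed
  moreover have "\<forall>x\<in>s ` {0..<k}. \<forall>y\<in>s ` {0..<k}. adj H x y \<longleftrightarrow> adj H (f x) (f y)"
    using f same by auto
  moreover have "s ` {0..<k} \<subseteq> verts H" "s' ` {0..<k} \<subseteq> verts H" "finite (s ` {0..<k})"
    using s s' by auto
  ultimately have "\<exists>g. bij_betw g (verts H) (verts H) \<and>
      (\<forall>x\<in>verts H. \<forall>y\<in>verts H. adj H x y \<longleftrightarrow> adj H (g x) (g y)) \<and> (\<forall>x\<in>s ` {0..<k}. g x = f x)"
    using uh unfolding ultra_homogeneous_def by presburger
  then obtain g where "automorphism H g" "\<forall>x\<in>s ` {0..<k}. g x = f x"
    unfolding automorphism_def by blast
  then show thesis using f that by simp
qed

lemma sat_eq_if_atomic_type_eq: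
  assumes "ultra_homogeneous H" "\<forall>i<k. s i \<in> verts H" "\<forall>i<k. s' i \<in> verts H"
    and "atomic_type H k s = atomic_type H k s'" and fv: "fv \<phi> \<subseteq> {0..<k}"
  shows "sat H \<phi> s = sat H \<phi> s'"
proof -
  obtain g where g: "automorphism H g" "\<forall>i<k. g (s i) = s' i"
    using ultra_homogeneous_extend_tuple[OF assms(1-4)] .
  have "sat H \<phi> s' = sat H \<phi> (g \<circ> s)"
    using g(2) fv by (intro sat_cong) auto
  also have "\<dots> = sat H \<phi> s"
    using g(1) assms(2) fv by (intro sat_automorphism) auto
  finally show ?thesis by simp
qed

lemma ultra_homogeneous_qe:
  assumes uh: "ultra_homogeneous H" and k: "0 < k" and fv: "fv \<phi> \<subseteq> {0..<k}"
  obtains \<psi> where "qfree \<psi>" "fv \<psi> \<subseteq> {0..<k}" "\<forall>s. (\<forall>i<k. s i \<in> verts H) \<longrightarrow> sat H \<psi> s = sat H \<phi> s"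
proof -
  define R where "R = atomic_type H k ` {s. (\<forall>i<k. s i \<in> verts H) \<and> sat H \<phi> s}"
  have "finite R" unfolding R_def by (rule finite_subset[OF _ finite_range_atomic_type]) auto
  then obtain Ds where Ds: "set Ds = R" using finite_list by blast
  define \<psi> where "\<psi> = Disjs (map (atomic_type_formula k) Ds)"
  have "qfree \<psi>" by (auto simp: \<psi>_def qfree_atomic_type_formula)
  moreover have "fv \<psi> \<subseteq> {0..<k}" using k fv_atomic_type_formula[OF k] by (auto simp: \<psi>_def)
  moreover have "sat H \<psi> s = sat H \<phi> s" if s: "\<forall>i<k. s i \<in> verts H" for s
  proof -
    have "sat H \<psi> s \<longleftrightarrow>
        (\<exists>s0. (\<forall>i<k. s0 i \<in> verts H) \<and> sat H \<phi> s0 \<and> atomic_type H k s = atomic_type H k s0)"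
      by (auto simp: \<psi>_def Ds R_def sat_atomic_type_formula)
    also have "\<dots> \<longleftrightarrow> sat H \<phi> s"
      using s sat_eq_if_atomic_type_eq[OF uh s _ _ fv] by blast
    finally show ?thesis .
  qed
  ultimately show thesis using that by blast
qed

lemma QF_convergent_imp_FO_convergent:
  assumes ec: "elem_converges_to Gs H" and uh: "ultra_homogeneous H" and qf: "QF_convergent Gs"
  shows "FO_convergent Gs"
  unfolding FO_convergent_def
proof
  fix \<phi>
  define k where "k = nvars \<phi>"
  show "convergent (\<lambda>n. stone \<phi> (Gs n))"
  proof (cases "k = 0")
    case True
    then show ?thesis using convergent_stone_sentence[OF ec] by (simp add: sentence_iff_nvars k_def)
  next
    case False
    obtain \<psi> where \<psi>: "qfree \<psi>" "fv \<psi> \<subseteq> {0..<k}"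
      and equiv: "\<forall>s. (\<forall>i<k. s i \<in> verts H) \<longrightarrow> sat H \<psi> s = sat H \<phi> s"
      using ultra_homogeneous_qe[OF uh _ fv_subset_nvars] False k_def by blast
    define \<psi>' where "\<psi>' = Conj \<psi> (Taut k)"
    have nvars: "nvars \<psi>' = k" "nvars \<phi> = k"
      using nvars_Conj_Taut[OF \<psi>(2)] False by (simp_all add: \<psi>'_def k_def)
    define \<theta> where "\<theta> = Alls [0..<k] (Iff \<psi>' \<phi>)"
    have sen: "sentence \<theta>"
      using \<psi>(2) fv_subset_nvars[of \<phi>] False by (auto simp: sentence_def \<theta>_def \<psi>'_def k_def fv_Taut)
    have "models H \<theta>" using equiv by (simp add: \<theta>_def \<psi>'_def models_Alls_upt)
    then have "\<forall>\<^sub>F n in sequentially. models (Gs n) \<theta>"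
      using eventually_models_iff[OF ec sen] by simp
    then have eq: "\<forall>\<^sub>F n in sequentially. stone \<psi>' (Gs n) = stone \<phi> (Gs n)"
      by eventually_elim (rule stone_eq_if_models_Alls_Iff[OF nvars], simp add: \<theta>_def)
    have "convergent (\<lambda>n. stone \<psi>' (Gs n))"
      using qf \<psi>(1) by (simp add: QF_convergent_def \<psi>'_def)
    then show ?thesis by (rule convergent_cong[OF eq, THEN iffD1])
  qed
qed

section \<open>Counting satisfying assignments\<close>

lemma card_Collect_bij_betw:
  assumes h: "bij_betw h A B" and PQ: "\<And>x. x \<in> A \<Longrightarrow> P x \<longleftrightarrow> Q (h x)"
  shows "card {x \<in> A. P x} = card {y \<in> B. Q y}"
proof (rule bij_betw_same_card, rule bij_betw_imageI)
  show "inj_on h {x \<in> A. P x}" using h by (auto simp: bij_betw_def inj_on_def)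
  show "h ` {x \<in> A. P x} = {y \<in> B. Q y}" using h PQ by (auto simp: bij_betw_def)
qed

lemma bij_betw_PiE_compose:
  assumes r: "bij_betw r I J"
  shows "bij_betw (\<lambda>t. restrict (t \<circ> r) I) (J \<rightarrow>\<^sub>E B) (I \<rightarrow>\<^sub>E B)"
proof (rule bij_betw_byWitness[where f' = "\<lambda>u. restrict (u \<circ> inv_into I r) J"])
  have r_inv: "\<And>i. i \<in> I \<Longrightarrow> inv_into I r (r i) = i" "\<And>j. j \<in> J \<Longrightarrow> r (inv_into I r j) = j"
    "\<And>j. j \<in> J \<Longrightarrow> inv_into I r j \<in> I" "\<And>i. i \<in> I \<Longrightarrow> r i \<in> J"
    using bij_betw_inv_into_left[OF r] bij_betw_inv_into_right[OF r]
      bij_betw_apply[OF bij_betw_inv_into[OF r]] bij_betw_apply[OF r] by blast+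
  show "\<forall>t\<in>J \<rightarrow>\<^sub>E B. restrict (restrict (t \<circ> r) I \<circ> inv_into I r) J = t"
  proof (intro ballI ext)
    fix t j assume t: "t \<in> J \<rightarrow>\<^sub>E B"
    show "restrict (restrict (t \<circ> r) I \<circ> inv_into I r) J j = t j"
    proof (cases "j \<in> J")
      case True
      then show ?thesis using r_inv(2,3)[of j] by simp
    qed (use t PiE_arb in fastforce)
  qed
  show "\<forall>u\<in>I \<rightarrow>\<^sub>E B. restrict (restrict (u \<circ> inv_into I r) J \<circ> r) I = u"
  proof (intro ballI ext)
    fix u i assume u: "u \<in> I \<rightarrow>\<^sub>E B"
    show "restrict (restrict (u \<circ> inv_into I r) J \<circ> r) I i = u i"
    proof (cases "i \<in> I")
      case True
      then show ?thesis using r_inv(1,4)[of i] by simp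
    qed (use u PiE_arb in fastforce)
  qed
  show "(\<lambda>t. restrict (t \<circ> r) I) ` (J \<rightarrow>\<^sub>E B) \<subseteq> I \<rightarrow>\<^sub>E B"
    using r_inv(4) by (auto simp: PiE_mem)
  show "(\<lambda>u. restrict (u \<circ> inv_into I r) J) ` (I \<rightarrow>\<^sub>E B) \<subseteq> J \<rightarrow>\<^sub>E B"
    using r_inv(3) by (auto simp: PiE_mem)
qed

fun is_atom :: "fo \<Rightarrow> bool" where
  "is_atom (Adj i j) = True"
| "is_atom (Eq i j) = True"
| "is_atom _ = False"

text \<open>Quantified formulas are left unchanged: renaming is only applied to quantifier-free ones.\<close>
fun rename :: "(nat \<Rightarrow> nat) \<Rightarrow> fo \<Rightarrow> fo" where
  "rename r (Adj i j) = Adj (r i) (r j)"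
| "rename r (Eq i j) = Eq (r i) (r j)"
| "rename r (Neg \<phi>) = Neg (rename r \<phi>)"
| "rename r (Conj \<phi> \<psi>) = Conj (rename r \<phi>) (rename r \<psi>)"
| "rename r (Ex i \<phi>) = Ex i \<phi>"

lemma sat_rename: "qfree \<phi> \<Longrightarrow> sat G (rename r \<phi>) s = sat G \<phi> (s \<circ> r)"
  by (induction \<phi>) auto

lemma fv_rename: "qfree \<phi> \<Longrightarrow> fv (rename r \<phi>) = r ` fv \<phi>"
  by (induction \<phi>) auto

lemma qfree_rename: "qfree \<phi> \<Longrightarrow> qfree (rename r \<phi>)"
  by (induction \<phi>) auto

lemma is_atom_rename: "is_atom \<phi> \<Longrightarrow> is_atom (rename r \<phi>)"
  by (cases \<phi>) auto

lemma qfree_if_is_atom: "is_atom \<phi> \<Longrightarrow> qfree \<phi>"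
  by (cases \<phi>) auto

lemma count_sat_rename:
  assumes r: "bij_betw r I J" and \<phi>s: "\<forall>\<phi>\<in>set \<phi>s. qfree \<phi> \<and> fv \<phi> \<subseteq> I"
  shows "count_sat J (map (rename r) \<phi>s) G = count_sat I \<phi>s G"
  unfolding count_sat_def
proof (rule card_Collect_bij_betw[OF bij_betw_PiE_compose[OF r]])
  fix t
  have "sat G (rename r \<phi>) t \<longleftrightarrow> sat G \<phi> (restrict (t \<circ> r) I)" if "\<phi> \<in> set \<phi>s" for \<phi>
    using \<phi>s that by (auto simp: sat_rename intro!: sat_cong) blast
  then show "(\<forall>\<phi>\<in>set (map (rename r) \<phi>s). sat G \<phi> t) \<longleftrightarrow> (\<forall>\<phi>\<in>set \<phi>s. sat G \<phi> (restrict (t \<circ> r) I))"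
    by simp
qed

lemma bij_betw_PiE_merge:
  assumes "i \<noteq> j" "i \<in> I" "j \<in> I"
  shows "bij_betw (\<lambda>t. t(j := undefined)) {t \<in> I \<rightarrow>\<^sub>E B. t j = t i} ((I - {j}) \<rightarrow>\<^sub>E B)"
proof (rule bij_betw_byWitness[where f' = "\<lambda>u. u(j := u i)"])
  show "\<forall>t\<in>{t \<in> I \<rightarrow>\<^sub>E B. t j = t i}. (t(j := undefined))(j := (t(j := undefined)) i) = t"
    using assms(1) by (auto simp: fun_eq_iff)
  show "\<forall>u\<in>(I - {j}) \<rightarrow>\<^sub>E B. (u(j := u i))(j := undefined) = u"
  proof (intro ballI ext)
    fix u a assume "u \<in> (I - {j}) \<rightarrow>\<^sub>E B"
    then show "((u(j := u i))(j := undefined)) a = u a" using PiE_arb[of u _ _ j] by simp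
  qed
  show "(\<lambda>t. t(j := undefined)) ` {t \<in> I \<rightarrow>\<^sub>E B. t j = t i} \<subseteq> (I - {j}) \<rightarrow>\<^sub>E B"
    by (auto simp: PiE_iff extensional_def split: if_splits)
  show "(\<lambda>u. u(j := u i)) ` ((I - {j}) \<rightarrow>\<^sub>E B) \<subseteq> {t \<in> I \<rightarrow>\<^sub>E B. t j = t i}"
  proof (intro image_subsetI CollectI conjI)
    fix u assume u: "u \<in> (I - {j}) \<rightarrow>\<^sub>E B"
    then have "u(j := u i) \<in> insert j (I - {j}) \<rightarrow>\<^sub>E B"
      using assms by (intro PiE_fun_upd) (auto simp: PiE_mem)
    then show "u(j := u i) \<in> I \<rightarrow>\<^sub>E B" using assms(3) by (simp add: insert_absorb)
    show "(u(j := u i)) j = (u(j := u i)) i" using assms(1) by simp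
  qed
qed

lemma count_sat_merge:
  assumes ij: "i \<noteq> j" "i \<in> I" "j \<in> I" and Eq: "Eq i j \<in> set \<phi>s" and qf: "\<forall>\<phi>\<in>set \<phi>s. qfree \<phi>"
  shows "count_sat I \<phi>s G = count_sat (I - {j}) (map (rename (id(j := i))) (removeAll (Eq i j) \<phi>s)) G"
proof -
  let ?\<phi>s = "removeAll (Eq i j) \<phi>s"
  have "count_sat I \<phi>s G = card {t \<in> {t \<in> I \<rightarrow>\<^sub>E verts G. t j = t i}. \<forall>\<phi>\<in>set ?\<phi>s. sat G \<phi> t}"
    unfolding count_sat_def using Eq by (intro arg_cong[where f = card]) auto
  also have "\<dots> = card {u \<in> (I - {j}) \<rightarrow>\<^sub>E verts G. \<forall>\<phi>\<in>set ?\<phi>s. sat G (rename (id(j := i)) \<phi>) u}"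
  proof (rule card_Collect_bij_betw[OF bij_betw_PiE_merge[OF ij]])
    fix t assume "t \<in> {t \<in> I \<rightarrow>\<^sub>E verts G. t j = t i}"
    then have "t(j := undefined) \<circ> id(j := i) = t" using ij(1) by (auto simp: fun_eq_iff)
    then show "(\<forall>\<phi>\<in>set ?\<phi>s. sat G \<phi> t) \<longleftrightarrow> (\<forall>\<phi>\<in>set ?\<phi>s. sat G (rename (id(j := i)) \<phi>) (t(j := undefined)))"
      using qf by (simp add: sat_rename)
  qed
  finally show ?thesis by (simp add: count_sat_def)
qed

lemma count_sat_Adj_loop:
  assumes "is_graph G" "Adj i i \<in> set \<phi>s"
  shows "count_sat I \<phi>s G = 0"
proof -
  have "\<not> (\<forall>\<phi>\<in>set \<phi>s. sat G \<phi> t)" for t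
    using assms unfolding is_graph_def by (metis sat.simps(1))
  then have "{t \<in> I \<rightarrow>\<^sub>E verts G. \<forall>\<phi>\<in>set \<phi>s. sat G \<phi> t} = {}" by blast
  then show ?thesis unfolding count_sat_def by (metis card.empty)
qed

lemma count_sat_removeAll_Eq_refl: "count_sat I (removeAll (Eq i i) \<phi>s) G = count_sat I \<phi>s G"
  by (auto simp: count_sat_def intro!: arg_cong[where f = card])

lemma count_sat_eq_hom_count:
  assumes G: "is_graph G" and F: "verts F = I" and Adj: "\<forall>\<phi>\<in>set \<phi>s. \<exists>u v. \<phi> = Adj u v"
    and adj_F: "\<And>u v. adj F u v \<longleftrightarrow> Adj u v \<in> set \<phi>s \<or> Adj v u \<in> set \<phi>s"
  shows "count_sat I \<phi>s G = hom_count F G"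
proof -
  have "(\<forall>\<phi>\<in>set \<phi>s. sat G \<phi> t) \<longleftrightarrow> (\<forall>u v. adj F u v \<longrightarrow> adj G (t u) (t v))" for t
  proof
    assume "\<forall>\<phi>\<in>set \<phi>s. sat G \<phi> t"
    then show "\<forall>u v. adj F u v \<longrightarrow> adj G (t u) (t v)"
      using G adj_F by (fastforce simp: is_graph_def)
  next
    assume "\<forall>u v. adj F u v \<longrightarrow> adj G (t u) (t v)"
    then show "\<forall>\<phi>\<in>set \<phi>s. sat G \<phi> t" using Adj adj_F by fastforce
  qed
  then show ?thesis by (simp add: count_sat_def hom_count_def F)
qed

definition atom_graph :: "nat set \<Rightarrow> fo list \<Rightarrow> nat graph" where
  "atom_graph I \<phi>s = \<lparr>verts = I, adj = (\<lambda>u v. Adj u v \<in> set \<phi>s \<or> Adj v u \<in> set \<phi>s)\<rparr>"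

lemma finite_graph_atom_graph:
  assumes "finite I" "I \<noteq> {}" "\<forall>\<phi>\<in>set \<phi>s. \<exists>u v. \<phi> = Adj u v \<and> u \<noteq> v \<and> u \<in> I \<and> v \<in> I"
  shows "finite_graph (atom_graph I \<phi>s)"
  using assms by (fastforce simp: finite_graph_def is_graph_def atom_graph_def)

lemma count_sat_eq_hom_count_atom_graph:
  assumes "is_graph G" "\<forall>\<phi>\<in>set \<phi>s. \<exists>u v. \<phi> = Adj u v"
  shows "count_sat I \<phi>s G = hom_count (atom_graph I \<phi>s) G"
  using assms by (intro count_sat_eq_hom_count) (auto simp: atom_graph_def)

lemma hom_density_eq_stone:
  fixes F :: "nat graph"
  assumes F: "finite_graph F"
  obtains \<chi> where "qfree \<chi>" "\<And>G :: 'a graph. is_graph G \<Longrightarrow> stone \<chi> G = hom_density F G"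
proof -
  define m where "m = card (verts F)"
  have "finite (verts F)" "verts F \<noteq> {}" and edges: "\<And>u v. adj F u v \<Longrightarrow> (u, v) \<in> verts F \<times> verts F"
    and sym: "\<And>u v. adj F u v \<Longrightarrow> adj F v u"
    using F by (auto simp: finite_graph_def is_graph_def)
  then have m: "0 < m" by (simp add: m_def card_gt_0_iff)
  have "{(u, v). adj F u v} \<subseteq> verts F \<times> verts F" using edges by auto
  then have "finite {(u, v). adj F u v}"
    using \<open>finite (verts F)\<close> by (simp add: finite_subset)
  then obtain es where es: "set es = {(u, v). adj F u v}" using finite_list by blast
  define \<phi>s where "\<phi>s = map (\<lambda>(u, v). Adj u v) es"
  obtain r where r: "bij_betw r (verts F) {0..<m}"
    using ex_bij_betw_finite_nat[OF \<open>finite (verts F)\<close>] by (auto simp: m_def atLeast0LessThan)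
  define \<chi> where "\<chi> = Conj (Conjs (map (rename r) \<phi>s)) (Taut m)"
  have \<phi>s: "\<forall>\<phi>\<in>set \<phi>s. qfree \<phi> \<and> fv \<phi> \<subseteq> verts F" using edges by (auto simp: \<phi>s_def es)
  have "fv (Conjs (map (rename r) \<phi>s)) \<subseteq> {0..<m}"
    using \<phi>s bij_betw_apply[OF r] m by (fastforce simp: fv_rename)
  then have nvars: "nvars \<chi> = m" using m by (simp add: \<chi>_def nvars_Conj_Taut)
  show thesis
  proof
    show "qfree \<chi>" using \<phi>s by (simp add: \<chi>_def qfree_rename)
    fix G :: "'a graph" assume G: "is_graph G"
    have "count_sat {0..<m} [\<chi>] G = count_sat {0..<m} (map (rename r) \<phi>s) G"
      by (simp add: count_sat_def \<chi>_def)
    also have "\<dots> = count_sat (verts F) \<phi>s G" by (rule count_sat_rename[OF r \<phi>s])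
    also have "\<dots> = hom_count F G"
      by (rule count_sat_eq_hom_count[OF G refl]) (auto simp: \<phi>s_def es intro: sym)
    finally show "stone \<chi> G = hom_density F G"
      by (simp add: stone_eq_count_sat hom_density_def nvars m_def)
  qed
qed

lemma QF_convergent_imp_L_convergent:
  fixes Gs :: "nat \<Rightarrow> 'a graph"
  assumes G: "\<And>n. is_graph (Gs n)" and qf: "QF_convergent Gs"
  shows "L_convergent Gs"
  unfolding L_convergent_def
proof (intro allI impI)
  fix F :: "nat graph" assume "finite_graph F"
  then obtain \<chi> where "qfree \<chi>" and \<chi>: "\<And>G :: 'a graph. is_graph G \<Longrightarrow> stone \<chi> G = hom_density F G"
    using hom_density_eq_stone by metis
  have "(\<lambda>n. hom_density F (Gs n)) = (\<lambda>n. stone \<chi> (Gs n))" using \<chi> G by simp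
  then show "convergent (\<lambda>n. hom_density F (Gs n))"
    using qf \<open>qfree \<chi>\<close> by (simp add: QF_convergent_def)
qed

section \<open>From L-convergence to QF-convergence\<close>

lemma atom_list_cases:
  assumes "\<forall>\<phi>\<in>set \<phi>s. is_atom \<phi> \<and> fv \<phi> \<subseteq> I"
  obtains (loop) i where "Adj i i \<in> set \<phi>s"
    | (refl) i where "Eq i i \<in> set \<phi>s"
    | (merge) i j where "Eq i j \<in> set \<phi>s" "i \<noteq> j"
    | (edges) "\<forall>\<phi>\<in>set \<phi>s. \<exists>u v. \<phi> = Adj u v \<and> u \<noteq> v \<and> u \<in> I \<and> v \<in> I"
proof -
  have "\<exists>u v. \<phi> = Adj u v \<and> u \<noteq> v \<and> u \<in> I \<and> v \<in> I \<or> \<phi> = Adj u u \<or> \<phi> = Eq u u \<or> \<phi> = Eq u v \<and> u \<noteq> v"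
    if "\<phi> \<in> set \<phi>s" for \<phi>
    using assms that by (cases \<phi>) fastforce+
  then show thesis using that by metis
qed

lemma convergent_count_sat_atoms:
  fixes Gs :: "nat \<Rightarrow> 'a graph"
  assumes L: "L_convergent Gs" and G: "\<And>n. is_graph (Gs n)"
    and inv: "convergent (\<lambda>n. 1 / real (card (verts (Gs n))))"
    and "finite I" and "\<forall>\<phi>\<in>set \<phi>s. is_atom \<phi> \<and> fv \<phi> \<subseteq> I"
  shows "convergent (\<lambda>n. real (count_sat I \<phi>s (Gs n)) / real (card (verts (Gs n))) ^ card I)"
  using assms(4,5)
proof (induction "length \<phi>s" arbitrary: I \<phi>s rule: less_induct)
  case less
  from less.prems(2) show ?case
  proof (cases rule: atom_list_cases)
    case (loop i)
    then show ?thesis using count_sat_Adj_loop[OF G] by (simp add: convergent_const)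
  next
    case (refl i)
    then have "length (removeAll (Eq i i) \<phi>s) < length \<phi>s" by (rule length_removeAll_less)
    then have "convergent (\<lambda>n. real (count_sat I (removeAll (Eq i i) \<phi>s) (Gs n)) / real (card (verts (Gs n))) ^ card I)"
      by (rule less.hyps) (use less.prems in auto)
    then show ?thesis by (simp add: count_sat_removeAll_Eq_refl)
  next
    case (merge i j)
    define \<phi>s' where "\<phi>s' = map (rename (id(j := i))) (removeAll (Eq i j) \<phi>s)"
    have ij: "i \<in> I" "j \<in> I" using merge less.prems by auto
    have "length \<phi>s' < length \<phi>s" using merge by (simp add: \<phi>s'_def length_removeAll_less)
    moreover have "\<forall>\<phi>\<in>set \<phi>s'. is_atom \<phi> \<and> fv \<phi> \<subseteq> I - {j}"
      using less.prems(2) merge(2) ij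
      by (fastforce simp: \<phi>s'_def is_atom_rename fv_rename qfree_if_is_atom)
    ultimately have "convergent (\<lambda>n. real (count_sat (I - {j}) \<phi>s' (Gs n)) / real (card (verts (Gs n))) ^ card (I - {j}) * (1 / real (card (verts (Gs n)))))"
      using less.prems(1) by (intro convergent_mult less.hyps inv) auto
    moreover have "count_sat I \<phi>s G = count_sat (I - {j}) \<phi>s' G" for G :: "'a graph"
      unfolding \<phi>s'_def
      by (rule count_sat_merge[OF merge(2) ij merge(1)]) (use less.prems(2) qfree_if_is_atom in blast)
    moreover have "card I = Suc (card (I - {j}))" using card_Suc_Diff1[OF less.prems(1) ij(2)] by simp
    ultimately show ?thesis by (simp add: mult.commute)
  next
    case edges
    show ?thesis
    proof (cases "I = {}")
      case True
      then have "\<phi>s = []" using edges by (cases \<phi>s) auto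
      then show ?thesis using True by (simp add: count_sat_def convergent_const)
    next
      case False
      have "finite_graph (atom_graph I \<phi>s)" using less.prems(1) False edges by (rule finite_graph_atom_graph)
      then have "convergent (\<lambda>n. hom_density (atom_graph I \<phi>s) (Gs n))" using L by (simp add: L_convergent_def)
      moreover have "\<forall>\<phi>\<in>set \<phi>s. \<exists>u v. \<phi> = Adj u v" using edges by blast
      ultimately show ?thesis
        by (simp add: hom_density_def count_sat_eq_hom_count_atom_graph[OF G] atom_graph_def)
    qed
  qed
qed

text \<open>The indicator of a quantifier-free formula as a linear combination of indicators of
  conjunctions of atoms: \<open>[\<not>\<phi>] = 1 - [\<phi>]\<close> and \<open>[\<phi> \<and> \<psi>] = [\<phi>] [\<psi>]\<close>.\<close>
fun expansion :: "fo \<Rightarrow> (real \<times> fo list) list" where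
  "expansion (Adj i j) = [(1, [Adj i j])]"
| "expansion (Eq i j) = [(1, [Eq i j])]"
| "expansion (Neg \<phi>) = (1, []) # [(- c, \<alpha>s). (c, \<alpha>s) \<leftarrow> expansion \<phi>]"
| "expansion (Conj \<phi> \<psi>) = [(c * d, \<alpha>s @ \<beta>s). (c, \<alpha>s) \<leftarrow> expansion \<phi>, (d, \<beta>s) \<leftarrow> expansion \<psi>]"
| "expansion (Ex i \<phi>) = []"

lemma sum_list_product_expansion:
  fixes w :: "fo list \<Rightarrow> real"
  assumes w: "\<And>\<alpha>s \<beta>s. w (\<alpha>s @ \<beta>s) = w \<alpha>s * w \<beta>s"
  shows "(\<Sum>(c, \<alpha>s) \<leftarrow> [(c * d, \<alpha>s @ \<beta>s). (c, \<alpha>s) \<leftarrow> p, (d, \<beta>s) \<leftarrow> q]. c * w \<alpha>s) =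
    (\<Sum>(c, \<alpha>s) \<leftarrow> p. c * w \<alpha>s) * (\<Sum>(d, \<beta>s) \<leftarrow> q. d * w \<beta>s)"
proof (induction p)
  case (Cons x p)
  have "(\<Sum>y \<leftarrow> q. fst y * (fst x * w (snd x @ snd y))) = fst x * w (snd x) * (\<Sum>y \<leftarrow> q. fst y * w (snd y))"
    by (induction q) (auto simp: w algebra_simps)
  with Cons show ?case by (simp add: case_prod_beta o_def algebra_simps)
qed simp

lemma of_bool_sat_expansion:
  "qfree \<phi> \<Longrightarrow> of_bool (sat G \<phi> t) = (\<Sum>(c, \<alpha>s) \<leftarrow> expansion \<phi>. c * of_bool (\<forall>\<alpha>\<in>set \<alpha>s. sat G \<alpha> t))"
proof (induction \<phi>)
  case (Neg \<phi>)
  have "(\<Sum>(c, \<alpha>s) \<leftarrow> [(- c, \<alpha>s). (c, \<alpha>s) \<leftarrow> p]. c * w \<alpha>s) = - (\<Sum>(c, \<alpha>s) \<leftarrow> p. c * w \<alpha>s)"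
    for p :: "(real \<times> fo list) list" and w :: "fo list \<Rightarrow> real"
    by (induction p) auto
  moreover have "(\<Sum>(c, \<alpha>s) \<leftarrow> expansion \<phi>. c * of_bool (\<forall>\<alpha>\<in>set \<alpha>s. sat G \<alpha> t)) = of_bool (sat G \<phi> t)"
    using Neg by simp
  ultimately show ?case by simp
next
  case (Conj \<phi> \<psi>)
  have "of_bool (\<forall>\<alpha>\<in>set (\<alpha>s @ \<beta>s). sat G \<alpha> t) =
      of_bool (\<forall>\<alpha>\<in>set \<alpha>s. sat G \<alpha> t) * (of_bool (\<forall>\<alpha>\<in>set \<beta>s. sat G \<alpha> t) :: real)" for \<alpha>s \<beta>s
    by auto
  moreover have "(\<Sum>(c, \<alpha>s) \<leftarrow> expansion \<phi>. c * of_bool (\<forall>\<alpha>\<in>set \<alpha>s. sat G \<alpha> t)) = of_bool (sat G \<phi> t)"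
    "(\<Sum>(c, \<alpha>s) \<leftarrow> expansion \<psi>. c * of_bool (\<forall>\<alpha>\<in>set \<alpha>s. sat G \<alpha> t)) = of_bool (sat G \<psi> t)"
    using Conj by simp_all
  ultimately show ?case by (simp add: sum_list_product_expansion)
qed simp_all

lemma expansion_atoms: "(c, \<alpha>s) \<in> set (expansion \<phi>) \<Longrightarrow> \<alpha> \<in> set \<alpha>s \<Longrightarrow> is_atom \<alpha> \<and> fv \<alpha> \<subseteq> fv \<phi>"
proof (induction \<phi> arbitrary: c \<alpha>s)
  case (Neg \<phi>)
  then show ?case by auto
next
  case (Conj \<phi> \<psi>)
  then obtain x y where "x \<in> set (expansion \<phi>)" "y \<in> set (expansion \<psi>)" "\<alpha>s = snd x @ snd y"
    by auto
  then show ?case using Conj.IH[of "fst x" "snd x"] Conj.IH[of "fst y" "snd y"] Conj.prems(2) by auto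
qed auto

lemma sum_sum_list_swap: "(\<Sum>t\<in>T. \<Sum>x\<leftarrow>xs. f x t) = (\<Sum>x\<leftarrow>xs. \<Sum>t\<in>T. f x t)"
  by (induction xs) (simp_all add: sum.distrib)

lemma stone_expansion:
  assumes "qfree \<phi>" "finite (verts G)"
  shows "stone \<phi> G = (\<Sum>(c, \<alpha>s) \<leftarrow> expansion \<phi>.
            c * (real (count_sat {0..<nvars \<phi>} \<alpha>s G) / real (card (verts G)) ^ nvars \<phi>))"
proof -
  let ?T = "{0..<nvars \<phi>} \<rightarrow>\<^sub>E verts G"
  have card: "real (count_sat {0..<nvars \<phi>} \<alpha>s G) = (\<Sum>t\<in>?T. of_bool (\<forall>\<alpha>\<in>set \<alpha>s. sat G \<alpha> t))" for \<alpha>s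
  proof -
    have "{t \<in> ?T. \<forall>\<alpha>\<in>set \<alpha>s. sat G \<alpha> t} = ?T \<inter> {t. \<forall>\<alpha>\<in>set \<alpha>s. sat G \<alpha> t}" by blast
    then show ?thesis using assms(2) by (simp add: count_sat_def finite_PiE)
  qed
  have "real (count_sat {0..<nvars \<phi>} [\<phi>] G) = (\<Sum>t\<in>?T. of_bool (sat G \<phi> t))"
    by (simp add: card)
  also have "\<dots> = (\<Sum>(c, \<alpha>s) \<leftarrow> expansion \<phi>. c * real (count_sat {0..<nvars \<phi>} \<alpha>s G))"
    by (simp add: of_bool_sat_expansion[OF assms(1)] sum_sum_list_swap split_def card sum_distrib_left)
  finally show ?thesis
    by (simp add: stone_eq_count_sat split_def divide_inverse sum_list_mult_const[symmetric] mult.assoc)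
qed

lemma convergent_sum_list:
  fixes f :: "'b \<Rightarrow> nat \<Rightarrow> real"
  shows "(\<And>x. x \<in> set xs \<Longrightarrow> convergent (f x)) \<Longrightarrow> convergent (\<lambda>n. \<Sum>x\<leftarrow>xs. f x n)"
  by (induction xs) (simp_all add: convergent_const convergent_add)

lemma L_convergent_imp_QF_convergent:
  fixes Gs :: "nat \<Rightarrow> 'a graph"
  assumes L: "L_convergent Gs" and fin: "\<And>n. finite_graph (Gs n)"
    and inv: "convergent (\<lambda>n. 1 / real (card (verts (Gs n))))"
  shows "QF_convergent Gs"
  unfolding QF_convergent_def
proof (intro allI impI)
  fix \<phi> assume qf: "qfree \<phi>"
  define k where "k = nvars \<phi>"
  have G: "is_graph (Gs n)" "finite (verts (Gs n))" for n using fin by (simp_all add: finite_graph_def)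
  have "convergent (\<lambda>n. c * (real (count_sat {0..<k} \<alpha>s (Gs n)) / real (card (verts (Gs n))) ^ k))"
    if "(c, \<alpha>s) \<in> set (expansion \<phi>)" for c \<alpha>s
  proof -
    have "\<forall>\<alpha>\<in>set \<alpha>s. is_atom \<alpha> \<and> fv \<alpha> \<subseteq> {0..<k}"
      using expansion_atoms[OF that] fv_subset_nvars[of \<phi>] by (auto simp: k_def)
    from convergent_count_sat_atoms[OF L G(1) inv finite_atLeastLessThan this]
    show ?thesis by (intro convergent_mult convergent_const) simp
  qed
  then have "convergent (\<lambda>n. \<Sum>(c, \<alpha>s) \<leftarrow> expansion \<phi>.
      c * (real (count_sat {0..<k} \<alpha>s (Gs n)) / real (card (verts (Gs n))) ^ k))"
    by (intro convergent_sum_list) auto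
  then show "convergent (\<lambda>n. stone \<phi> (Gs n))"
    by (simp add: stone_expansion[OF qf G(2)] k_def)
qed

theorem lemma5p8:
  fixes Gs :: "nat \<Rightarrow> nat graph" and H :: "nat graph"
  assumes "\<And>n. finite_graph (Gs n)"
    and "is_graph H"
    and "elem_converges_to Gs H"
    and "ultra_homogeneous H"
  shows "(FO_convergent Gs \<longleftrightarrow> QF_convergent Gs) \<and>
         (QF_convergent Gs \<longleftrightarrow> L_convergent Gs)"
proof -
  have graphs: "\<And>n. is_graph (Gs n)" using assms(1) by (simp add: finite_graph_def)
  have "FO_convergent Gs \<Longrightarrow> QF_convergent Gs" by (simp add: FO_convergent_def QF_convergent_def)
  moreover have "QF_convergent Gs \<Longrightarrow> FO_convergent Gs"
    using QF_convergent_imp_FO_convergent[OF assms(3,4)] .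
  moreover have "QF_convergent Gs \<Longrightarrow> L_convergent Gs"
    using QF_convergent_imp_L_convergent[OF graphs] .
  moreover have "L_convergent Gs \<Longrightarrow> QF_convergent Gs"
    using L_convergent_imp_QF_convergent[OF _ assms(1) convergent_inverse_card[OF assms(1-3)]] .
  ultimately show ?thesis by blast
qed

end
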